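(* For every integer $N \ge 4$ and every $\Omega \in [-\pi,\pi]$, with $W = 4$ and the window $\mathcal W^\star$ defined in the context, the captured energy fraction satisfies $$E_{4,N}(\delta) = \sum_{n\in\mathcal W^\star}|y_n|^2 \;\ge\; \frac{80}{9\pi^2} \approx 0.9006 > 0.9 .$$ (The value $80/(9\pi^2)$ is the minimum over $\delta\in[0,\tfrac12]$ of $\sum_{n\in\mathcal W^\star}\operatorname{sinc}^2(n-\nu)$, attained at $\delta = 1/2$.)
   Context: Steering vector $\mathbf a(\Omega) = [1, e^{j\Omega}, \dots, e^{j(N-1)\Omega}]^\top$. Dirichlet kernel $D_N(\omega) = \frac1N\sum_{n=0}^{N-1}e^{j\omega n}$. Normalized DFT coefficients $y_n = D_N(\Omega - 2\pi n/N)$ for integers $n$ (so $\sum_{n=0}^{N-1}|y_n|^2=1$). $\operatorname{sinc}(x)=\sin(\pi x)/(\pi x)$. Put $\nu = N\Omega/(2\pi)$, $n_0=\mathrm{round}(\nu)$, $\delta = |\nu-n_0|\in[0,1/2]$. For $W=4$ the window is $\mathcal W^\star = \{n_0-1, n_0, n_0+1, n_0+2\}$ if $\nu = n_0+\delta$ and $\mathcal W^\star = \{n_0-2,n_0-1,n_0,n_0+1\}$ if $\nu = n_0-\delta$ (bins taken modulo $N$). *)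

theory Defs
  imports Complex_Main
begin

definition dirichlet :: "nat \<Rightarrow> real \<Rightarrow> complex" where
  "dirichlet N w = (1 / of_nat N) * (\<Sum>n<N. cis (w * real n))"

definition dft_coeff :: "nat \<Rightarrow> real \<Rightarrow> int \<Rightarrow> complex" where
  "dft_coeff N \<Omega> n = dirichlet N (\<Omega> - 2 * pi * real_of_int n / real N)"

text \<open>nu = N Omega / (2 pi); n0 = round nu (library round: floor (x + 1/2)).\<close>
definition nu :: "nat \<Rightarrow> real \<Rightarrow> real" where
  "nu N \<Omega> = real N * \<Omega> / (2 * pi)"

text \<open>The W = 4 window (as a set of integer bins, to be reduced modulo N).\<close>
definition window4 :: "nat \<Rightarrow> real \<Rightarrow> int set" where
  "window4 N \<Omega> = (let n0 = round (nu N \<Omega>) in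
     if nu N \<Omega> \<ge> real_of_int n0 then {n0 - 1 .. n0 + 2} else {n0 - 2 .. n0 + 1})"

definition energy4 :: "nat \<Rightarrow> real \<Rightarrow> real" where
  "energy4 N \<Omega> = (\<Sum>n\<in>window4 N \<Omega>. (cmod (dft_coeff N \<Omega> (n mod int N)))\<^sup>2)"

end

theory Submission
  imports Defs "HOL-Analysis.Complex_Transcendental"
begin

text \<open>
  Summing the geometric series gives
  \<open>|y\<^sub>n|\<^sup>2 = sin\<^sup>2(\<pi>x) / (N\<^sup>2 sin\<^sup>2(\<pi>x/N))\<close> with \<open>x = \<nu> - n\<close>, so \<open>|sin t| \<le> |t|\<close> yields
  \<open>|y\<^sub>n|\<^sup>2 \<ge> sinc\<^sup>2(\<nu> - n)\<close> for every \<open>N\<close>. On the window the offsets \<open>\<nu> - n\<close> are, up to sign,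
  \<open>\<delta> + 1, \<delta>, \<delta> - 1, \<delta> - 2\<close>, so the energy is at least
  \<open>sin\<^sup>2(\<pi>\<delta>)/\<pi>\<^sup>2 \<cdot> (1/\<delta>\<^sup>2 + 1/(1+\<delta>)\<^sup>2 + 1/(1-\<delta>)\<^sup>2 + 1/(2-\<delta>)\<^sup>2)\<close>.
  That this is at least \<open>80/(9\<pi>\<^sup>2)\<close>, with equality at \<open>\<delta> = 1/2\<close>, is shown separately for
  \<open>\<delta> \<le> 1/4\<close> (Taylor bound for \<open>sin\<close>) and for \<open>\<delta> = 1/2 - u\<close>, \<open>u \<le> 1/4\<close> (bound
  \<open>cos(\<pi>u) \<ge> 1 - \<pi>\<^sup>2u\<^sup>2/2\<close>); each case reduces to a polynomial inequality in the squared
  variable on \<open>[0, 1/16]\<close>.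
\<close>

definition sinc :: "real \<Rightarrow> real" where
  "sinc x = (if x = 0 then 1 else sin (pi * x) / (pi * x))"

lemma sinc_minus [simp]: "sinc (- x) = sinc x"
  by (simp add: sinc_def)

lemma sinc_sq_shift:
  assumes "x \<notin> \<int>" and "j \<in> \<int>"
  shows "sinc (x - j)^2 = sin (pi * x)^2 / (pi * (x - j))^2"
proof -
  have "x - j \<noteq> 0" using assms by auto
  moreover have "sin (pi * (x - j))^2 = sin (pi * x)^2"
  proof -
    have "sin (j * pi) = 0" using assms(2) by (simp add: sin_times_pi_eq_0)
    moreover from this have "cos (j * pi)^2 = 1" using sin_cos_squared_add[of "j * pi"] by simp
    ultimately show ?thesis
      by (simp add: right_diff_distrib sin_diff power_mult_distrib mult.commute)
  qed
  ultimately show ?thesis by (simp add: sinc_def power_divide)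
qed

lemma norm_cis_minus_1_sq: "cmod (cis a - 1)^2 = 4 * sin (a/2)^2"
proof -
  have "cmod (cis a - 1)^2 = (cos a - 1)^2 + sin a ^2" by (simp add: cmod_power2)
  also have "\<dots> = 2 - 2 * cos a" using sin_cos_squared_add[of a] by (simp add: power2_eq_square algebra_simps)
  also have "cos a = 1 - 2 * sin (a/2)^2" using cos_double_sin[of "a/2"] by simp
  finally show ?thesis by simp
qed

lemma norm_dirichlet_sq:
  assumes "sin (w/2) \<noteq> 0"
  shows "cmod (dirichlet N w)^2 = sin (real N * w / 2)^2 / (real N^2 * sin (w/2)^2)"
proof -
  have "(\<Sum>n<N. cis (w * real n)) = (\<Sum>n<N. cis w ^ n)"
    by (intro sum.cong refl) (simp add: Complex.DeMoivre mult.commute)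
  also have "\<dots> = (cis w ^ N - 1) / (cis w - 1)"
    using assms norm_cis_minus_1_sq[of w] by (intro geometric_sum) auto
  also have "cis w ^ N = cis (real N * w)" by (rule Complex.DeMoivre)
  finally have "cmod (dirichlet N w)^2 = cmod (cis (real N * w) - 1)^2 / (real N^2 * cmod (cis w - 1)^2)"
    unfolding dirichlet_def by (simp add: norm_mult norm_divide power_mult_distrib power_divide)
  also have "\<dots> = sin (real N * w / 2)^2 / (real N^2 * sin (w/2)^2)"
    by (simp add: norm_cis_minus_1_sq)
  finally show ?thesis .
qed

lemma sinc_sq_le_norm_dirichlet_sq:
  assumes N: "N > 0"
  shows "sinc (real N * w / (2 * pi))^2 \<le> cmod (dirichlet N w)^2"
proof -
  define x where "x = real N * w / (2 * pi)"
  have w2: "w/2 = pi * (x / real N)" and Nw: "real N * w / 2 = pi * x"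
    using N by (simp_all add: x_def field_simps)
  consider "x = 0" | "x \<in> \<int>" "x \<noteq> 0" | "x \<notin> \<int>" by blast
  then have "sinc x ^ 2 \<le> cmod (dirichlet N w)^2"
  proof cases
    case 1
    then have "w = 0" using N by (simp add: x_def)
    then show ?thesis using N 1 by (simp add: sinc_def dirichlet_def)
  next
    case 2
    then have "sin (pi * x) = 0" by (metis sin_times_pi_eq_0 mult.commute)
    then show ?thesis using 2(2) by (simp add: sinc_def)
  next
    case 3
    have "sin (w/2) \<noteq> 0"
    proof
      assume "sin (w/2) = 0"
      then have "x / real N \<in> \<int>"
        unfolding w2 by (metis mult.commute sin_times_pi_eq_0)
      then obtain k where "x / real N = of_int k" by (auto elim: Ints_cases)
      then have "x = of_int (int N * k)" using N by (simp add: field_simps)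
      with 3 show False by simp
    qed
    have "sin (w/2)^2 \<le> (w/2)^2"
      using abs_sin_x_le_abs_x[of "w/2"] by (metis abs_ge_zero power2_abs power_mono)
    with \<open>sin (w/2) \<noteq> 0\<close> N
    have "sin (pi * x)^2 / (real N^2 * (w/2)^2) \<le> sin (pi * x)^2 / (real N^2 * sin (w/2)^2)"
      by (intro divide_left_mono mult_pos_pos) auto
    moreover have "real N^2 * (w/2)^2 = (pi * x)^2"
      using N by (simp add: w2 power_mult_distrib power_divide)
    moreover have "x \<noteq> 0" using 3 by auto
    ultimately show ?thesis
      using norm_dirichlet_sq[OF \<open>sin (w/2) \<noteq> 0\<close>]
      by (simp add: Nw sinc_def power_divide)
  qed
  then show ?thesis by (simp add: x_def)
qed

lemma dirichlet_add_2pi_multiple: "dirichlet N (w + 2 * pi * of_int q) = dirichlet N w"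
proof -
  have "cis ((w + 2 * pi * of_int q) * real k) = cis (w * real k)" for k :: nat
  proof -
    have "(w + 2 * pi * of_int q) * real k = w * real k + 2 * pi * of_int (q * int k)"
      by (simp add: algebra_simps)
    then show ?thesis by (simp add: cis_mult[symmetric] cis_multiple_2pi)
  qed
  then show ?thesis unfolding dirichlet_def by simp
qed

lemma dft_coeff_mod:
  assumes "N > 0" shows "dft_coeff N \<Omega> (n mod int N) = dft_coeff N \<Omega> n"
proof -
  have mod_eq: "n mod int N = n - int N * (n div int N)"
    by (metis minus_div_mult_eq_mod mult.commute)
  have "\<Omega> - 2 * pi * of_int (n mod int N) / real N
      = (\<Omega> - 2 * pi * of_int n / real N) + 2 * pi * of_int (n div int N)"
    unfolding mod_eq using assms by (simp add: field_simps)
  then show ?thesis unfolding dft_coeff_def by (simp only: dirichlet_add_2pi_multiple)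
qed

lemma sinc_sq_le_norm_dft_coeff_sq:
  assumes "N > 0" shows "sinc (nu N \<Omega> - of_int n)^2 \<le> cmod (dft_coeff N \<Omega> n)^2"
proof -
  have "real N * (\<Omega> - 2 * pi * of_int n / real N) / (2 * pi) = nu N \<Omega> - of_int n"
    using assms by (simp add: nu_def field_simps)
  then show ?thesis
    using sinc_sq_le_norm_dirichlet_sq[OF assms, of "\<Omega> - 2 * pi * of_int n / real N"]
    unfolding dft_coeff_def by simp
qed

lemma pi_sq_bounds: "98696/10000 \<le> pi^2" "pi^2 \<le> 987/100"
proof -
  have "(3.141592653588::real)^2 \<le> pi^2" using pi_approx(1) by (intro power_mono) auto
  then show "98696/10000 \<le> pi^2" by (simp add: power2_eq_square)
  have "pi^2 \<le> (3.1415926535899::real)^2" using pi_approx(2) pi_gt_zero by (intro power_mono) auto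
  then show "pi^2 \<le> 987/100" by (simp add: power2_eq_square)
qed

lemma cos_ge_1_minus_sq_half: "1 - x^2/2 \<le> cos (x::real)"
proof -
  have "sin (x/2)^2 \<le> (x/2)^2"
    using abs_sin_x_le_abs_x[of "x/2"] by (metis abs_ge_zero power2_abs power_mono)
  then show ?thesis using cos_double_sin[of "x/2"] by (simp add: power_divide)
qed

lemma sin_ge_taylor5:
  fixes x :: real assumes "0 \<le> x" shows "x - x^3/6 - x^5/120 \<le> sin x"
proof -
  have "\<bar>sin x - (\<Sum>m<5. sin_coeff m * x ^ m)\<bar> \<le> inverse (fact 5) * \<bar>x\<bar> ^ 5"
    by (rule Maclaurin_sin_bound)
  moreover have "(\<Sum>m<5. sin_coeff m * x ^ m) = x - x^3/6"
    by (simp add: lessThan_nat_numeral sin_coeff_def fact_numeral)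
  ultimately have "\<bar>sin x - (x - x^3/6)\<bar> \<le> x^5/120" using assms by (simp add: fact_numeral)
  then show ?thesis by (simp only: abs_le_iff) linarith
qed

lemma inv_sq_sum_ge:
  fixes d :: real assumes "0 < d" "d < 1"
  shows "1/d^2 + 9/4 \<le> 1/d^2 + 1/(1+d)^2 + 1/(1-d)^2 + 1/(2-d)^2"
proof -
  have "1 - 2*d \<le> 1/(1+d)^2"
  proof -
    have "(1 - 2*d) * (1+d)^2 \<le> 1" using assms by (simp add: power2_eq_square algebra_simps)
    then show ?thesis using assms by (simp add: field_simps)
  qed
  moreover have "1 + 2*d \<le> 1/(1-d)^2"
  proof -
    have "(1 + 2*d) * (1-d)^2 = 1 - d^2 * (3 - 2*d)"
      by (simp add: power2_eq_square algebra_simps)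
    also have "\<dots> \<le> 1" using assms by simp
    finally show ?thesis using assms by (simp add: field_simps)
  qed
  moreover have "1/4 \<le> 1/(2-d)^2"
  proof -
    have "(2-d)^2 \<le> 2^2" using assms by (intro power_mono) auto
    then show ?thesis using assms by (simp add: field_simps)
  qed
  ultimately show ?thesis by linarith
qed

text \<open>The coefficients are \<open>\<pi>\<^sup>2/6\<close> and \<open>\<pi>\<^sup>4/120\<close>, rounded up.\<close>
lemma sin_pi_ge_polynomial:
  fixes d :: real assumes "0 \<le> d"
  shows "pi * d * (1 - 1645/1000 * d^2 - 812/1000 * d^4) \<le> sin (pi * d)"
proof -
  have "pi^4 \<le> 9744/100"
  proof -
    have "pi^4 = pi^2 * pi^2" by (simp add: power4_eq_xxxx power2_eq_square)
    also have "\<dots> \<le> 987/100 * (987/100)" using pi_sq_bounds by (intro mult_mono) auto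
    finally show ?thesis by simp
  qed
  then have "1 - 1645/1000 * d^2 - 812/1000 * d^4 \<le> 1 - pi^2 * d^2 / 6 - pi^4 * d^4 / 120"
    using pi_sq_bounds(2) mult_right_mono[of "pi^2" "987/100" "d^2"]
      mult_right_mono[of "pi^4" "9744/100" "d^4"] by simp
  then have "pi * d * (1 - 1645/1000 * d^2 - 812/1000 * d^4)
      \<le> pi * d * (1 - pi^2 * d^2 / 6 - pi^4 * d^4 / 120)"
    using assms by (intro mult_left_mono) auto
  also have "\<dots> = (pi*d) - (pi*d)^3/6 - (pi*d)^5/120"
    by (simp add: algebra_simps power2_eq_square power3_eq_cube eval_nat_numeral)
  also have "\<dots> \<le> sin (pi*d)" using assms by (intro sin_ge_taylor5) auto
  finally show ?thesis .
qed

text \<open>Certificate: in \<open>s = 16 w \<in> [0, 1]\<close> the difference has nonnegative Bernstein coefficients.\<close>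
lemma sin_region_polynomial_bound:
  fixes w :: real assumes "0 \<le> w" "w \<le> 1/16"
  shows "80/9 \<le> 98696/10000 * (1 - 1645/1000 * w - 812/1000 * w^2)^2 * (1 + 9/4 * w)"
proof -
  define s where "s = 16 * w"
  have s: "0 \<le> s" "0 \<le> 1 - s" using assms by (auto simp: s_def)
  have "98696/10000 * (1 - 1645/1000 * w - 812/1000 * w^2)^2 * (1 + 9/4 * w) - 80/9
     = (11033/11250) * (1-s)^5 + (9589571/2250000) * (1-s)^4 * s
       + (806093688773/115200000000) * (1-s)^3 * s^2
       + (193139648456437/36864000000000) * (1-s)^2 * s^3
       + (601638392182811/368640000000000) * (1-s) * s^4
       + (320967124446401/2949120000000000) * s^5"
    unfolding s_def by algebra
  moreover have "0 \<le> (11033/11250) * (1-s)^5 + (9589571/2250000) * (1-s)^4 * s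
       + (806093688773/115200000000) * (1-s)^3 * s^2
       + (193139648456437/36864000000000) * (1-s)^2 * s^3
       + (601638392182811/368640000000000) * (1-s) * s^4
       + (320967124446401/2949120000000000) * s^5"
    using s by (intro add_nonneg_nonneg mult_nonneg_nonneg zero_le_power) auto
  ultimately show ?thesis by linarith
qed

lemma sin_sq_inv_sq_sum_ge_small:
  fixes d :: real assumes d: "0 < d" "d \<le> 1/4"
  shows "80/9 \<le> sin (pi*d)^2 * (1/d^2 + 1/(1+d)^2 + 1/(1-d)^2 + 1/(2-d)^2)"
proof -
  define w where "w = d^2"
  have "d^2 \<le> (1/4)^2" using d by (intro power_mono) auto
  then have w: "0 < w" "w \<le> 1/16" unfolding w_def using d by (auto simp: power2_eq_square)
  define g where "g = 1 - 1645/1000 * w - 812/1000 * w^2"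
  have "w^2 \<le> 1/16 * (1/16)" unfolding power2_eq_square using w by (intro mult_mono) auto
  then have "0 \<le> g" unfolding g_def using w by linarith
  moreover have "pi * d * g \<le> sin (pi*d)"
    using sin_pi_ge_polynomial[of d] d by (simp add: g_def w_def power_mult_distrib flip: power_mult)
  ultimately have sin_ge: "pi^2 * w * g^2 \<le> sin (pi*d)^2"
    using d power_mono[of "pi * d * g" "sin (pi*d)" 2] by (simp add: w_def power_mult_distrib)
  have "80/9 \<le> 98696/10000 * g^2 * (1 + 9/4 * w)"
    unfolding g_def using sin_region_polynomial_bound[of w] w by simp
  also have "\<dots> \<le> pi^2 * g^2 * (1 + 9/4 * w)"
    using pi_sq_bounds w by (intro mult_right_mono) auto
  also have "\<dots> = (pi^2 * w * g^2) * (1/d^2 + 9/4)"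
    using w by (simp add: w_def field_simps)
  also have "\<dots> \<le> sin (pi*d)^2 * (1/d^2 + 1/(1+d)^2 + 1/(1-d)^2 + 1/(2-d)^2)"
    using sin_ge inv_sq_sum_ge[of d] d w by (intro mult_mono) auto
  finally show ?thesis .
qed

text \<open>Certificate: in \<open>s = 16 v \<in> [0, 1]\<close> the quartic factor has nonnegative Bernstein coefficients.\<close>
lemma cos_region_rational_bound:
  fixes v :: real assumes v: "0 \<le> v" "v \<le> 1/16"
  shows "80/9 \<le> (1 - 987/200 * v)^2 * (8*(1+4* v)/(1-4* v)^2 + 2*(9/4+v)/(9/4-v)^2)"
proof -
  define s where "s = 16 * v"
  have s: "0 \<le> s" "0 \<le> 1 - s" using v by (auto simp: s_def)
  have "(1 - 987/200 * v)^2 * (8*(1+4* v)*(9/4-v)^2 + 2*(9/4+v)*(1-4* v)^2)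
        - 80/9 * ((1-4* v)^2 * (9/4-v)^2)
     = v * ((957/20) * (1-s)^4 + (152741609/1152000) * (1-s)^3 * s
       + (2892189523/23040000) * (1-s)^2 * s^2 + (1352567873/30720000) * (1-s) * s^3
       + (133604501/40960000) * s^4)"
    unfolding s_def by algebra
  moreover have "0 \<le> v * ((957/20) * (1-s)^4 + (152741609/1152000) * (1-s)^3 * s
       + (2892189523/23040000) * (1-s)^2 * s^2 + (1352567873/30720000) * (1-s) * s^3
       + (133604501/40960000) * s^4)"
    using s v by (intro add_nonneg_nonneg mult_nonneg_nonneg zero_le_power) auto
  ultimately have "80/9 * ((1-4* v)^2 * (9/4-v)^2)
      \<le> (1 - 987/200 * v)^2 * (8*(1+4* v)*(9/4-v)^2 + 2*(9/4+v)*(1-4* v)^2)"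
    by linarith
  moreover have "(1-4* v)^2 > 0" "(9/4-v)^2 > 0" using v by auto
  ultimately show ?thesis by (simp add: field_simps)
qed

lemma cos_sq_inv_sq_sum_ge:
  fixes u :: real assumes u: "0 \<le> u" "u \<le> 1/4"
  shows "80/9 \<le> cos (pi*u)^2 * (1/(1/2-u)^2 + 1/(3/2-u)^2 + 1/(1/2+u)^2 + 1/(3/2+u)^2)"
proof -
  define v where "v = u^2"
  have "u^2 \<le> (1/4)^2" using u by (intro power_mono) auto
  then have v: "0 \<le> v" "v \<le> 1/16" unfolding v_def by (auto simp: power2_eq_square)
  have "pi^2 * u^2 \<le> 987/100 * u^2" using pi_sq_bounds(2) by (rule mult_right_mono) simp
  then have "1 - 987/200 * v \<le> cos (pi*u)"
    using cos_ge_1_minus_sq_half[of "pi*u"] by (simp add: v_def power_mult_distrib)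
  moreover have "0 \<le> 1 - 987/200 * v" using v by simp
  ultimately have cos_ge: "(1 - 987/200 * v)^2 \<le> cos (pi*u)^2" by (intro power_mono)
  have "1/(1/2-u)^2 + 1/(1/2+u)^2 = 8*(1+4* v)/(1-4* v)^2"
    using u v unfolding v_def by (simp add: field_simps) (simp add: power2_eq_square algebra_simps)
  moreover have "1/(3/2-u)^2 + 1/(3/2+u)^2 = 2*(9/4+v)/(9/4-v)^2"
    using u v unfolding v_def by (simp add: field_simps) (simp add: power2_eq_square algebra_simps)
  ultimately have sum_eq: "1/(1/2-u)^2 + 1/(3/2-u)^2 + 1/(1/2+u)^2 + 1/(3/2+u)^2
      = 8*(1+4* v)/(1-4* v)^2 + 2*(9/4+v)/(9/4-v)^2"
    by simp
  have "0 \<le> 8*(1+4* v)/(1-4* v)^2 + 2*(9/4+v)/(9/4-v)^2" using v by simp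
  from mult_right_mono[OF cos_ge this] show ?thesis
    unfolding sum_eq using cos_region_rational_bound[OF v] by linarith
qed

lemma sin_sq_inv_sq_sum_ge:
  fixes d :: real assumes d: "0 < d" "d \<le> 1/2"
  shows "80/9 \<le> sin (pi*d)^2 * (1/d^2 + 1/(1+d)^2 + 1/(1-d)^2 + 1/(2-d)^2)"
proof (cases "d \<le> 1/4")
  case True
  then show ?thesis using sin_sq_inv_sq_sum_ge_small d by blast
next
  case False
  define u where "u = 1/2 - d"
  have "0 \<le> u" "u \<le> 1/4" using False d by (auto simp: u_def)
  then have "80/9 \<le> cos (pi*u)^2 * (1/(1/2-u)^2 + 1/(3/2-u)^2 + 1/(1/2+u)^2 + 1/(3/2+u)^2)"
    by (rule cos_sq_inv_sq_sum_ge)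
  moreover have "cos (pi*u) = sin (pi*d)" unfolding u_def by (simp add: sin_cos_eq algebra_simps)
  moreover have "1/2 - u = d" "3/2 - u = 1 + d" "1/2 + u = 1 - d" "3/2 + u = 2 - d"
    by (auto simp: u_def)
  ultimately show ?thesis by simp
qed

lemma sinc_sq_sum4_ge:
  fixes d :: real assumes d: "0 \<le> d" "d \<le> 1/2"
  shows "80 / (9 * pi^2) \<le> sinc (d + 1)^2 + sinc d^2 + sinc (d - 1)^2 + sinc (d - 2)^2"
proof (cases "d = 0")
  case True
  have "80 / (9 * pi^2) \<le> 1" using pi_sq_bounds by (simp add: field_simps)
  then show ?thesis
    using True zero_le_power2[of "sinc 1"] zero_le_power2[of "sinc (-1)"] zero_le_power2[of "sinc (-2)"]
    by (simp add: sinc_def)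
next
  case False
  have "d \<notin> \<int>"
  proof
    assume "d \<in> \<int>"
    then obtain k where "d = of_int k" by (auto elim: Ints_cases)
    with d False show False by (cases "k \<le> 0") auto
  qed
  define c where "c = sin (pi * d)^2 / pi^2"
  from sinc_sq_shift[OF \<open>d \<notin> \<int>\<close>]
  have shift: "sinc (d - of_int j)^2 = c * (1 / (d - of_int j)^2)" for j :: int
    by (simp add: c_def power_mult_distrib)
  have "sinc (d + 1)^2 = c * (1/(1+d)^2)" using shift[of "-1"] by (simp add: add.commute)
  moreover have "sinc d^2 = c * (1/d^2)" using shift[of 0] by simp
  moreover have "sinc (d - 1)^2 = c * (1/(1-d)^2)" using shift[of 1] by (simp add: power2_commute)
  moreover have "sinc (d - 2)^2 = c * (1/(2-d)^2)" using shift[of 2] by (simp add: power2_commute)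
  ultimately have "sinc (d + 1)^2 + sinc d^2 + sinc (d - 1)^2 + sinc (d - 2)^2
      = c * (1/d^2 + 1/(1+d)^2 + 1/(1-d)^2 + 1/(2-d)^2)"
    by (simp only: distrib_left)
  moreover have "80/9 / pi^2 \<le> sin (pi*d)^2 * (1/d^2 + 1/(1+d)^2 + 1/(1-d)^2 + 1/(2-d)^2) / pi^2"
    using sin_sq_inv_sq_sum_ge[of d] d False by (intro divide_right_mono) auto
  ultimately show ?thesis by (simp add: c_def)
qed

lemma sum_window4_sinc_sq:
  fixes N :: nat and \<Omega> :: real
  defines "\<delta> \<equiv> \<bar>nu N \<Omega> - of_int (round (nu N \<Omega>))\<bar>"
  shows "(\<Sum>n\<in>window4 N \<Omega>. sinc (nu N \<Omega> - of_int n)^2)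
      = sinc (\<delta> + 1)^2 + sinc \<delta>^2 + sinc (\<delta> - 1)^2 + sinc (\<delta> - 2)^2"
proof -
  define n0 where "n0 = round (nu N \<Omega>)"
  have sum4: "(\<Sum>n\<in>{a, a + 1, a + 2, a + 3}. f n) = f a + f (a + 1) + f (a + 2) + f (a + 3)"
    for a :: int and f :: "int \<Rightarrow> real"
    by simp
  show ?thesis
  proof (cases "nu N \<Omega> \<ge> of_int n0")
    case True
    then have window: "window4 N \<Omega> = {n0 - 1, n0 - 1 + 1, n0 - 1 + 2, n0 - 1 + 3}"
      by (auto simp: window4_def Let_def n0_def)
    have shifts: "nu N \<Omega> - of_int (n0 - 1) = \<delta> + 1" "nu N \<Omega> - of_int (n0 - 1 + 1) = \<delta>"
      "nu N \<Omega> - of_int (n0 - 1 + 2) = \<delta> - 1" "nu N \<Omega> - of_int (n0 - 1 + 3) = \<delta> - 2"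
      using True by (simp_all add: \<delta>_def n0_def)
    show ?thesis unfolding window sum4 shifts by (rule refl)
  next
    case False
    then have window: "window4 N \<Omega> = {n0 - 2, n0 - 2 + 1, n0 - 2 + 2, n0 - 2 + 3}"
      by (auto simp: window4_def Let_def n0_def)
    have shifts: "nu N \<Omega> - of_int (n0 - 2) = - (\<delta> - 2)"
      "nu N \<Omega> - of_int (n0 - 2 + 1) = - (\<delta> - 1)"
      "nu N \<Omega> - of_int (n0 - 2 + 2) = - \<delta>" "nu N \<Omega> - of_int (n0 - 2 + 3) = - (\<delta> + 1)"
      using False by (simp_all add: \<delta>_def n0_def)
    show ?thesis unfolding window sum4 shifts sinc_minus by linarith
  qed
qed

theorem mainTheorem2:
  fixes N :: nat and \<Omega> :: real
  assumes "N \<ge> 4" and "-pi \<le> \<Omega>" and "\<Omega> \<le> pi"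
  shows "energy4 N \<Omega> \<ge> 80 / (9 * pi\<^sup>2) \<and> 80 / (9 * pi\<^sup>2) > (0.9::real)"
proof
  have N: "N > 0" using assms(1) by simp
  define \<delta> where "\<delta> = \<bar>nu N \<Omega> - of_int (round (nu N \<Omega>))\<bar>"
  have "\<delta> \<le> 1/2" using of_int_round_abs_le[of "nu N \<Omega>"] by (simp add: \<delta>_def abs_minus_commute)
  then have "80 / (9 * pi\<^sup>2) \<le> sinc (\<delta> + 1)^2 + sinc \<delta>^2 + sinc (\<delta> - 1)^2 + sinc (\<delta> - 2)^2"
    by (intro sinc_sq_sum4_ge) (auto simp: \<delta>_def)
  also have "\<dots> = (\<Sum>n\<in>window4 N \<Omega>. sinc (nu N \<Omega> - of_int n)^2)"
    by (simp add: \<delta>_def sum_window4_sinc_sq)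
  also have "\<dots> \<le> (\<Sum>n\<in>window4 N \<Omega>. cmod (dft_coeff N \<Omega> n)^2)"
    using N by (intro sum_mono sinc_sq_le_norm_dft_coeff_sq)
  also have "\<dots> = energy4 N \<Omega>"
    using N by (simp add: energy4_def dft_coeff_mod)
  finally show "energy4 N \<Omega> \<ge> 80 / (9 * pi\<^sup>2)" .
  show "80 / (9 * pi\<^sup>2) > (0.9::real)"
    using pi_sq_bounds(2) by (simp add: field_simps)
qed

end
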